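(* Let $m,n$ be positive integers, let $(W_1,\dots,W_n)$ have the multinomial distribution with parameters $m$ and $(\frac1n,\dots,\frac1n)$, let $\gamma>0$ and put $k_m=\lfloor\gamma\log m\rfloor$. Then there exists a constant $c_\gamma>0$ such that $$\max_{k\le k_m}\ \max_{\substack{s_1,\dots,s_n\in\mathbb{N}_0\\ \sum_{j=1}^ns_j=k}}\Big(\frac nm\Big)^{\sum_{j=1}^n\mathbb{1}\{s_j\ge1\}}\mathbb{E}\big[W_1^{s_1}\cdots W_n^{s_n}\big]\le\Big(1+c_\gamma\frac{m^{1+\gamma}}{n}\Big)^{k_m}.$$ *)

theory Defs
  imports Complex_Main
begin

definition multinomial_support :: "nat \<Rightarrow> nat \<Rightarrow> (nat \<Rightarrow> nat) set" where
  "multinomial_support m n = {w. (\<forall>j\<ge>n. w j = 0) \<and> (\<Sum>j<n. w j) = m}"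

definition multinomial_pmf :: "nat \<Rightarrow> nat \<Rightarrow> (nat \<Rightarrow> nat) \<Rightarrow> real" where
  "multinomial_pmf m n w = fact m / (\<Prod>j<n. fact (w j)) * (1 / real n) ^ m"

text \<open>Mixed moment E[W_1^{s_1} ... W_n^{s_n}] for (W_1,...,W_n) ~ Multinomial(m; 1/n,...,1/n)
  (indices shifted to 0..n-1).\<close>
definition multinomial_moment :: "nat \<Rightarrow> nat \<Rightarrow> (nat \<Rightarrow> nat) \<Rightarrow> real" where
  "multinomial_moment m n s =
     (\<Sum>w\<in>multinomial_support m n. multinomial_pmf m n w * (\<Prod>j<n. real (w j) ^ s j))"

end

theory Submission
  imports Defs "HOL-Combinatorics.Stirling" "HOL-Library.FuncSet"
begin

text \<open>Writing each power \<open>W\<^sub>j ^ s\<^sub>j\<close> in falling factorials with Stirling numbers of the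
  second kind reduces the mixed moment to factorial moments, and for the uniform multinomial
  these are explicit: \<open>E[\<Prod>j. ffact \<tau>\<^sub>j W\<^sub>j] = ffact T m / n ^ T \<le> (m / n) ^ T\<close> with
  \<open>T = \<Sum>j. \<tau>\<^sub>j\<close>. Hence the moment is at most \<open>\<Prod>j. touchard s\<^sub>j (m / n)\<close>, the
  corresponding moment of independent Poisson(m/n) variables. The estimate
  \<open>Stirling (s + 1) (u + 1) \<le> (s choose u) (u + 1) ^ s \<le> (s choose u) e ^ (s u)\<close> and the binomial
  theorem give \<open>touchard (s + 1) x \<le> x (1 + e ^ s x) ^ s\<close>; each index with \<open>s\<^sub>j \<ge> 1\<close> pays
  the factor \<open>x = m / n\<close> that the normalisation removes, and \<open>s\<^sub>j \<le> \<gamma> ln m\<close> turns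
  \<open>e ^ s\<^sub>j\<close> into \<open>m powr \<gamma>\<close>. So the claim holds with \<open>c = 1\<close>.\<close>

definition ffact :: "nat \<Rightarrow> 'a::comm_ring_1 \<Rightarrow> 'a" where
  "ffact t x = (\<Prod>i<t. x - of_nat i)"

lemma ffact_0 [simp]: "ffact 0 x = 1"
  by (simp add: ffact_def)

lemma ffact_Suc: "ffact (Suc t) x = ffact t x * (x - of_nat t)"
  by (simp add: ffact_def)

lemma ffact_of_nat_eq_0_iff: "ffact t (of_nat w :: 'a::{idom, ring_char_0}) = 0 \<longleftrightarrow> w < t"
  unfolding ffact_def by auto

lemma ffact_of_nat_add: "ffact t (of_nat (a + t)) = (fact (a + t) / fact a :: 'a::field_char_0)"
proof (induction t)
  case (Suc t)
  have "ffact (Suc t) (of_nat (a + Suc t)) = of_nat (Suc (a + t)) * (ffact t (of_nat (a + t)) :: 'a)"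
    unfolding ffact_def by (subst prod.lessThan_Suc_shift) (simp add: algebra_simps)
  also have "\<dots> = of_nat (Suc (a + t)) * (fact (a + t) / fact a)"
    by (simp only: Suc.IH)
  finally show ?case
    by simp
qed simp

lemma ffact_of_nat_le_power: "ffact t (of_nat m) \<le> (of_nat m ^ t :: 'a::linordered_idom)"
proof (cases "t \<le> m")
  case True
  then have "(\<Prod>i<t. of_nat m - of_nat i) \<le> (\<Prod>i<t. of_nat m :: 'a)"
    by (intro prod_mono) auto
  then show ?thesis
    by (simp add: ffact_def)
next
  case False
  then have "ffact t (of_nat m) = (0 :: 'a)"
    by (simp add: ffact_of_nat_eq_0_iff)
  also have "0 \<le> (of_nat m ^ t :: 'a)"
    by simp
  finally show ?thesis .
qed

lemma power_eq_sum_Stirling_ffact: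
  "x ^ s = (\<Sum>t\<le>s. of_nat (Stirling s t) * ffact t (x :: 'a::comm_ring_1))"
proof (induction s)
  case (Suc s)
  have "x ^ Suc s = (\<Sum>t\<le>s. of_nat (Stirling s t) * (ffact (Suc t) x + of_nat t * ffact t x))"
    by (simp add: Suc.IH sum_distrib_left ffact_Suc algebra_simps)
  also have "\<dots> = (\<Sum>t\<le>s. of_nat (Stirling s t) * ffact (Suc t) x)
      + (\<Sum>t\<le>s. of_nat (t * Stirling s t) * ffact t x)"
    by (simp add: sum.distrib algebra_simps)
  also have "(\<Sum>t\<le>s. of_nat (t * Stirling s t) * ffact t x)
      = (\<Sum>t\<le>Suc s. of_nat (t * Stirling s t) * ffact t x)"
    by simp
  also have "\<dots> = (\<Sum>t\<le>s. of_nat (Suc t * Stirling s (Suc t)) * ffact (Suc t) x)"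
    by (subst sum.atMost_Suc_shift) simp
  also have "(\<Sum>t\<le>s. of_nat (Stirling s t) * ffact (Suc t) x) + \<dots>
      = (\<Sum>t\<le>s. of_nat (Stirling (Suc s) (Suc t)) * ffact (Suc t) x)"
    by (simp add: sum.distrib algebra_simps)
  also have "\<dots> = (\<Sum>t\<le>Suc s. of_nat (Stirling (Suc s) t) * ffact t x)"
    by (subst sum.atMost_Suc_shift) simp
  finally show ?case .
qed simp

lemma Stirling_Suc_Suc_le: "Stirling (Suc s) (Suc u) \<le> (s choose u) * Suc u ^ s"
proof (induction s arbitrary: u)
  case 0
  then show ?case by (cases u) auto
next
  case (Suc s)
  show ?case
  proof (cases u)
    case (Suc v)
    have "Suc v ^ s \<le> Suc u ^ s"
      using Suc by (simp add: power_mono)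
    also have "\<dots> \<le> Suc u ^ Suc s"
      by simp
    finally have "Stirling (Suc s) u \<le> (s choose v) * Suc u ^ Suc s"
      using Suc.IH[of v] Suc by (simp add: order_trans)
    moreover have "Suc u * Stirling (Suc s) (Suc u) \<le> (s choose u) * Suc u ^ Suc s"
      using mult_le_mono2[OF Suc.IH[of u], of "Suc u"] by (simp only: power_Suc mult.left_commute)
    ultimately have "Suc u * Stirling (Suc s) (Suc u) + Stirling (Suc s) u
        \<le> ((s choose u) + (s choose v)) * Suc u ^ Suc s"
      by (simp only: add_mult_distrib add_mono)
    then show ?thesis
      using Suc by (simp only: Stirling.simps binomial_Suc_Suc add.commute)
  qed (simp del: Stirling.simps)
qed

definition touchard :: "nat \<Rightarrow> real \<Rightarrow> real" where
  "touchard s x = (\<Sum>t\<le>s. real (Stirling s t) * x ^ t)"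

lemma touchard_0 [simp]: "touchard 0 x = 1"
  by (simp add: touchard_def)

lemma touchard_nonneg: "x \<ge> 0 \<Longrightarrow> touchard s x \<ge> 0"
  unfolding touchard_def by (intro sum_nonneg) simp

lemma Stirling_Suc_Suc_le_exp: "real (Stirling (Suc s) (Suc u)) \<le> real (s choose u) * exp (real s) ^ u"
proof -
  have "real (Stirling (Suc s) (Suc u)) \<le> real (s choose u) * (1 + real u) ^ s"
    using of_nat_mono [OF Stirling_Suc_Suc_le [of s u]] by simp
  also have "(1 + real u) ^ s \<le> exp (real u) ^ s"
    by (intro power_mono exp_ge_add_one_self) simp_all
  also have "\<dots> = exp (real s) ^ u"
    by (simp add: exp_of_nat_mult [symmetric] mult.commute)
  finally show ?thesis
    by (simp add: mult_left_mono)
qed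

lemma touchard_Suc_le:
  assumes "x \<ge> 0"
  shows "touchard (Suc s) x \<le> x * (1 + exp (real s) * x) ^ s"
proof -
  have "touchard (Suc s) x = x * (\<Sum>u\<le>s. real (Stirling (Suc s) (Suc u)) * x ^ u)"
    unfolding touchard_def
    by (subst sum.atMost_Suc_shift)
      (simp add: sum_distrib_left algebra_simps Stirling.simps(3) del: Stirling.simps(4))
  also have "\<dots> \<le> x * (\<Sum>u\<le>s. real (s choose u) * (exp (real s) * x) ^ u)"
    using assms
    by (intro mult_left_mono sum_mono)
      (auto simp: power_mult_distrib mult.assoc [symmetric] simp del: Stirling.simps
        intro!: mult_right_mono Stirling_Suc_Suc_le_exp)
  also have "\<dots> = x * (1 + exp (real s) * x) ^ s"
    using binomial_ring [of "exp (real s) * x" 1 s] by (simp add: add.commute)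
  finally show ?thesis .
qed

lemma multinomial_support_le: "w \<in> multinomial_support m n \<Longrightarrow> w j \<le> m"
  unfolding multinomial_support_def
  by (cases "j < n") (auto intro: member_le_sum [of j "{..<n}" w, simplified, THEN order_trans])

lemma finite_multinomial_support: "finite (multinomial_support m n)"
proof (rule finite_subset)
  show "multinomial_support m n \<subseteq> {w. \<forall>j. (j \<in> {..<n} \<longrightarrow> w j \<in> {..m}) \<and> (j \<notin> {..<n} \<longrightarrow> w j = 0)}"
    using multinomial_support_le by (auto simp: multinomial_support_def)
  show "finite {w. \<forall>j. (j \<in> {..<n} \<longrightarrow> w j \<in> {..m}) \<and> (j \<notin> {..<n} \<longrightarrow> w j = (0::nat))}"
    by (rule finite_set_of_finite_funs) simp_all
qed

lemma sum_multinomial_support_Suc: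
  "(\<Sum>w\<in>multinomial_support m (Suc n). F w) =
   (\<Sum>i\<le>m. \<Sum>w\<in>multinomial_support (m - i) n. F (w(n := i)))"
proof -
  have "(\<Sum>w\<in>multinomial_support m (Suc n). F w)
      = (\<Sum>(i, w)\<in>(SIGMA i:{..m}. multinomial_support (m - i) n). F (w(n := i)))"
    by (rule sum.reindex_bij_witness [where j = "\<lambda>w. (w n, w(n := 0))" and i = "\<lambda>(i, w). w(n := i)"])
      (auto simp: multinomial_support_def)
  then show ?thesis
    by (simp add: sum.Sigma finite_multinomial_support)
qed

lemma multinomial_support_0: "multinomial_support m 0 = (if m = 0 then {\<lambda>_. 0} else {})"
  by (auto simp: multinomial_support_def)

lemma sum_multinomial_coeff:
  "(\<Sum>w\<in>multinomial_support m n. fact m / (\<Prod>j<n. fact (w j)) :: real) = real n ^ m"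
proof (induction n arbitrary: m)
  case 0
  then show ?case by (simp add: multinomial_support_0)
next
  case (Suc n)
  have "(\<Sum>w\<in>multinomial_support m (Suc n). fact m / (\<Prod>j<Suc n. fact (w j)) :: real)
      = (\<Sum>i\<le>m. real (m choose i) *
           (\<Sum>w\<in>multinomial_support (m - i) n. fact (m - i) / (\<Prod>j<n. fact (w j))))"
    unfolding sum_multinomial_support_Suc sum_distrib_left
  proof (intro sum.cong refl)
    fix i w
    assume "i \<in> {..m}"
    then have "real (m choose i) = fact m / (fact i * fact (m - i))"
      by (simp add: binomial_fact)
    moreover have "(\<Prod>j<n. fact ((w(n := i)) j) :: real) = (\<Prod>j<n. fact (w j))"
      by (intro prod.cong) auto
    ultimately show "fact m / (\<Prod>j<Suc n. fact ((w(n := i)) j)) 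
        = real (m choose i) * (fact (m - i) / (\<Prod>j<n. fact (w j)) :: real)"
      by (simp add: field_simps)
  qed
  also have "\<dots> = (1 + real n) ^ m"
    by (simp add: Suc.IH binomial_ring [of 1 "real n"])
  finally show ?case
    by simp
qed

lemma sum_multinomial_support_shift:
  assumes "(\<Sum>j<n. \<tau> j) \<le> m"
  shows "(\<Sum>w\<in>{w \<in> multinomial_support m n. \<forall>j<n. \<tau> j \<le> w j}. F w)
    = (\<Sum>w\<in>multinomial_support (m - (\<Sum>j<n. \<tau> j)) n. F (\<lambda>j. if j < n then w j + \<tau> j else 0))"
proof -
  define T where "T = (\<Sum>j<n. \<tau> j)"
  define shift where "shift w j = (if j < n then w j + \<tau> j else 0)" for w :: "nat \<Rightarrow> nat" and j
  have shift_mem: "shift w \<in> multinomial_support m n" if "w \<in> multinomial_support (m - T) n" for w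
  proof -
    have "(\<Sum>j<n. shift w j) = (\<Sum>j<n. w j) + T"
      by (simp add: shift_def T_def sum.distrib)
    then show ?thesis
      using that assms by (simp add: multinomial_support_def shift_def T_def)
  qed
  have unshift_mem: "(\<lambda>j. w j - \<tau> j) \<in> multinomial_support (m - T) n"
    if "w \<in> multinomial_support m n" "\<forall>j<n. \<tau> j \<le> w j" for w
  proof -
    have "(\<Sum>j<n. w j - \<tau> j) = (\<Sum>j<n. w j) - T"
      unfolding T_def using that(2) by (intro sum_subtractf_nat) simp
    then show ?thesis
      using that(1) by (simp add: multinomial_support_def)
  qed
  have shift_unshift: "shift (\<lambda>j. w j - \<tau> j) = w"
    if "w \<in> multinomial_support m n" "\<forall>j<n. \<tau> j \<le> w j" for w
    using that by (auto simp: shift_def multinomial_support_def fun_eq_iff)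
  have unshift_shift: "(\<lambda>j. shift w j - \<tau> j) = w" if "w \<in> multinomial_support (m - T) n" for w
    using that by (auto simp: shift_def multinomial_support_def fun_eq_iff)
  show ?thesis
    unfolding T_def [symmetric] shift_def [symmetric]
    by (rule sum.reindex_bij_witness [where i = shift and j = "\<lambda>w j. w j - \<tau> j"])
      (auto simp: shift_mem unshift_mem shift_unshift unshift_shift, simp add: shift_def)
qed

text \<open>If the \<open>\<tau> j\<close> add up to more than \<open>m\<close>, both sides vanish, so the truncated
  subtraction on the right is harmless.\<close>
lemma sum_multinomial_coeff_ffact:
  "(\<Sum>w\<in>multinomial_support m n. fact m / (\<Prod>j<n. fact (w j)) * (\<Prod>j<n. ffact (\<tau> j) (real (w j))))
    = ffact (\<Sum>j<n. \<tau> j) (real m) * real n ^ (m - (\<Sum>j<n. \<tau> j))"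
proof (cases "(\<Sum>j<n. \<tau> j) \<le> m")
  case True
  define T where "T = (\<Sum>j<n. \<tau> j)"
  define F where "F w = fact m * (\<Prod>j<n. ffact (\<tau> j) (real (w j)) / fact (w j))" for w
  have "(\<Sum>w\<in>multinomial_support m n. F w)
      = (\<Sum>w\<in>{w \<in> multinomial_support m n. \<forall>j<n. \<tau> j \<le> w j}. F w)"
    by (rule sum.mono_neutral_right)
      (auto simp: finite_multinomial_support F_def not_le ffact_of_nat_eq_0_iff)
  also have "\<dots> = (\<Sum>w\<in>multinomial_support (m - T) n. F (\<lambda>j. if j < n then w j + \<tau> j else 0))"
    using sum_multinomial_support_shift [OF True] by (simp add: T_def)
  also have "\<dots> = (\<Sum>w\<in>multinomial_support (m - T) n. fact m / (\<Prod>j<n. fact (w j)))"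
    by (intro sum.cong refl) (simp add: F_def ffact_of_nat_add prod_dividef del: of_nat_add)
  also have "\<dots> = fact m / fact (m - T) * real n ^ (m - T)"
    unfolding sum_multinomial_coeff [symmetric] sum_distrib_left by (intro sum.cong refl) simp
  also have "fact m / fact (m - T) = ffact T (real m)"
    using ffact_of_nat_add [where 'a = real, of T "m - T"] True by (simp add: T_def)
  finally show ?thesis
    by (simp add: F_def T_def prod.distrib prod_dividef)
next
  case False
  have "(\<Sum>w\<in>multinomial_support m n.
          fact m / (\<Prod>j<n. fact (w j)) * (\<Prod>j<n. ffact (\<tau> j) (real (w j)))) = 0"
  proof (intro sum.neutral ballI)
    fix w
    assume "w \<in> multinomial_support m n"
    then have "\<exists>j<n. w j < \<tau> j"
      using False sum_mono [of "{..<n}" \<tau> w] by (force simp: multinomial_support_def)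
    then show "fact m / (\<Prod>j<n. fact (w j)) * (\<Prod>j<n. ffact (\<tau> j) (real (w j))) = 0"
      by (auto simp: ffact_of_nat_eq_0_iff)
  qed
  moreover have "ffact (\<Sum>j<n. \<tau> j) (real m) = 0"
    using False by (simp add: ffact_of_nat_eq_0_iff)
  ultimately show ?thesis
    by (metis mult_zero_left)
qed

lemma multinomial_factorial_moment:
  assumes "n \<ge> 1"
  shows "(\<Sum>w\<in>multinomial_support m n. multinomial_pmf m n w * (\<Prod>j<n. ffact (\<tau> j) (real (w j))))
    = ffact (\<Sum>j<n. \<tau> j) (real m) / real n ^ (\<Sum>j<n. \<tau> j)"
proof -
  define T where "T = (\<Sum>j<n. \<tau> j)"
  have "(\<Sum>w\<in>multinomial_support m n. multinomial_pmf m n w * (\<Prod>j<n. ffact (\<tau> j) (real (w j))))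
      = ffact T (real m) * real n ^ (m - T) / real n ^ m"
    unfolding multinomial_pmf_def T_def sum_multinomial_coeff_ffact [symmetric] sum_divide_distrib
    by (intro sum.cong refl) (simp add: power_one_over)
  also have "\<dots> = ffact T (real m) / real n ^ T"
  proof (cases "T \<le> m")
    case True
    then have "real n ^ m = real n ^ T * real n ^ (m - T)"
      by (simp add: power_add [symmetric])
    then show ?thesis
      using assms by simp
  next
    case False
    then show ?thesis
      by (simp add: ffact_of_nat_eq_0_iff)
  qed
  finally show ?thesis
    by (simp add: T_def)
qed

lemma multinomial_moment_le_prod_touchard:
  assumes "n \<ge> 1"
  shows "multinomial_moment m n s \<le> (\<Prod>j<n. touchard (s j) (real m / real n))"
proof -
  define x where "x = real m / real n"
  define P where "P = (\<Pi>\<^sub>E j\<in>{..<n}. {..s j})"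
  have "multinomial_moment m n s
      = (\<Sum>w\<in>multinomial_support m n. multinomial_pmf m n w *
          (\<Sum>\<tau>\<in>P. \<Prod>j<n. real (Stirling (s j) (\<tau> j)) * ffact (\<tau> j) (real (w j))))"
    unfolding multinomial_moment_def P_def power_eq_sum_Stirling_ffact [of "real _"]
    by (simp add: prod_sum_PiE)
  also have "\<dots> = (\<Sum>\<tau>\<in>P. (\<Prod>j<n. real (Stirling (s j) (\<tau> j))) *
      (\<Sum>w\<in>multinomial_support m n. multinomial_pmf m n w * (\<Prod>j<n. ffact (\<tau> j) (real (w j)))))"
    unfolding sum_distrib_left prod.distrib
    by (subst sum.swap) (simp add: algebra_simps)
  also have "\<dots> \<le> (\<Sum>\<tau>\<in>P. (\<Prod>j<n. real (Stirling (s j) (\<tau> j))) * x ^ (\<Sum>j<n. \<tau> j))"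
    unfolding multinomial_factorial_moment [OF assms] x_def power_divide
    using assms by (intro sum_mono mult_left_mono divide_right_mono ffact_of_nat_le_power prod_nonneg) auto
  also have "\<dots> = (\<Prod>j<n. touchard (s j) x)"
    unfolding touchard_def P_def power_sum prod.distrib [symmetric]
    by (rule prod_sum_PiE [symmetric]) simp_all
  finally show ?thesis
    by (simp add: x_def)
qed

lemma touchard_div_le:
  assumes "x > 0" and "s \<ge> 1" and "exp (real s) \<le> M"
  shows "touchard s x / x \<le> (1 + M * x) ^ s"
proof -
  obtain s' where s': "s = Suc s'"
    using assms(2) by (cases s) auto
  have "exp (real s') \<le> exp (real s)"
    using s' by simp
  then have "exp (real s') \<le> M"
    using assms(3) by linarith
  then have "1 + exp (real s') * x \<le> 1 + M * x"
    using assms(1) by (simp add: mult_right_mono)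
  have "touchard s x / x \<le> (1 + exp (real s') * x) ^ s'"
    using touchard_Suc_le [of x s'] assms(1) s' by (simp add: divide_le_eq mult.commute)
  also have "\<dots> \<le> (1 + M * x) ^ s'"
    using \<open>1 + exp (real s') * x \<le> 1 + M * x\<close> assms(1) by (intro power_mono) simp_all
  also have "\<dots> \<le> (1 + M * x) ^ s"
    using \<open>exp (real s') \<le> M\<close> assms(1) s'
    by (intro power_increasing) (simp_all add: order_trans [OF exp_ge_zero])
  finally show ?thesis .
qed

lemma normalized_multinomial_moment_le:
  assumes "m \<ge> 1" and "n \<ge> 1" and "\<And>j. j < n \<Longrightarrow> exp (real (s j)) \<le> M"
  shows "(real n / real m) ^ card {j. j < n \<and> s j \<ge> 1} * multinomial_moment m n s
    \<le> (1 + M * (real m / real n)) ^ (\<Sum>j<n. s j)"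
proof -
  define x where "x = real m / real n"
  have x: "x > 0"
    using assms(1,2) by (simp add: x_def)
  have "(real n / real m) ^ card {j. j < n \<and> s j \<ge> 1} = (\<Prod>j<n. if s j \<ge> 1 then 1 / x else 1)"
    by (simp add: prod.If_cases Int_def x_def)
  then have "(real n / real m) ^ card {j. j < n \<and> s j \<ge> 1} * multinomial_moment m n s
      \<le> (\<Prod>j<n. if s j \<ge> 1 then 1 / x else 1) * (\<Prod>j<n. touchard (s j) x)"
    using multinomial_moment_le_prod_touchard [OF assms(2), of m s] x
    by (simp add: x_def mult_left_mono prod_nonneg)
  also have "\<dots> = (\<Prod>j<n. (if s j \<ge> 1 then touchard (s j) x / x else 1))"
    unfolding prod.distrib [symmetric] by (intro prod.cong refl) (auto simp: Suc_le_eq)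
  also have "\<dots> \<le> (\<Prod>j<n. (1 + M * x) ^ s j)"
    using x assms(3) touchard_div_le
    by (intro prod_mono) (auto simp: touchard_nonneg Suc_le_eq)
  also have "\<dots> = (1 + M * x) ^ (\<Sum>j<n. s j)"
    by (simp add: power_sum)
  finally show ?thesis
    by (simp add: x_def)
qed

lemma exp_le_powr_if_le_nat_floor:
  fixes x \<gamma> :: real
  assumes "x \<ge> 1" and "\<gamma> \<ge> 0" and "s \<le> nat \<lfloor>\<gamma> * ln x\<rfloor>"
  shows "exp (real s) \<le> x powr \<gamma>"
proof -
  have "real s \<le> real (nat \<lfloor>\<gamma> * ln x\<rfloor>)"
    using assms(3) by simp
  also have "\<dots> \<le> \<gamma> * ln x"
    using assms(1,2) by simp
  finally show ?thesis
    using assms(1) by (simp add: powr_def)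
qed

theorem lemma4p4:
  fixes \<gamma> :: real
  assumes "\<gamma> > 0"
  shows "\<exists>c>0. \<forall>m n :: nat. m \<ge> 1 \<longrightarrow> n \<ge> 1 \<longrightarrow>
           (\<forall>k \<le> nat \<lfloor>\<gamma> * ln (real m)\<rfloor>. \<forall>s :: nat \<Rightarrow> nat.
              (\<forall>j\<ge>n. s j = 0) \<longrightarrow> (\<Sum>j<n. s j) = k \<longrightarrow>
              (real n / real m) ^ card {j. j < n \<and> s j \<ge> 1} * multinomial_moment m n s
                \<le> (1 + c * real m powr (1 + \<gamma>) / real n) ^ nat \<lfloor>\<gamma> * ln (real m)\<rfloor>)"
proof (intro exI [of _ 1] conjI allI impI)
  fix m n k :: nat and s :: "nat \<Rightarrow> nat"
  assume m: "m \<ge> 1" and n: "n \<ge> 1" and k: "k \<le> nat \<lfloor>\<gamma> * ln (real m)\<rfloor>"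
    and "\<forall>j\<ge>n. s j = 0" and sk: "(\<Sum>j<n. s j) = k"
  have "exp (real (s j)) \<le> real m powr \<gamma>" if "j < n" for j
  proof (rule exp_le_powr_if_le_nat_floor)
    have "s j \<le> k"
      using that sk by (metis member_le_sum finite_lessThan lessThan_iff zero_le)
    then show "s j \<le> nat \<lfloor>\<gamma> * ln (real m)\<rfloor>"
      using k by simp
  qed (use m assms in simp_all)
  then have "(real n / real m) ^ card {j. j < n \<and> s j \<ge> 1} * multinomial_moment m n s
      \<le> (1 + real m powr \<gamma> * (real m / real n)) ^ k"
    using normalized_multinomial_moment_le [OF m n] sk by blast
  also have "\<dots> \<le> (1 + real m powr \<gamma> * (real m / real n)) ^ nat \<lfloor>\<gamma> * ln (real m)\<rfloor>"
    using k by (intro power_increasing) simp_all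
  also have "real m powr \<gamma> * (real m / real n) = 1 * real m powr (1 + \<gamma>) / real n"
    using m by (simp add: powr_add)
  finally show "(real n / real m) ^ card {j. j < n \<and> s j \<ge> 1} * multinomial_moment m n s
      \<le> (1 + 1 * real m powr (1 + \<gamma>) / real n) ^ nat \<lfloor>\<gamma> * ln (real m)\<rfloor>" .
qed simp

end
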